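(* For every $\varepsilon>0$ there is a constant $C_\varepsilon$ such that for all positive integers $n$ and all $D\ge0$, the number of pairs $(m,M)$ that are height profiles of some sum-free subset of $\Lambda(R\cup L)$ meeting every fiber and have discrepancy $D$ is at most $2^{\varepsilon D+C_\varepsilon n}$.
   Context: Sum-free: no $a,b,c$ (not necessarily distinct) with $a+b=c$, coordinatewise addition in $\mathbb{Z}^2$. $\Lambda(X)=\mathbb{Z}^2\cap X$. $R=\{(x,y):0.7n\le x+y\le n,\ |x-y|\le0.8n\}$, $L=\{(x,y):2\lceil0.7n\rceil\le x+y\le1.7n,\ |x-y|\le0.4n\}$, $w=\lfloor0.4n\rfloor$. Fibers $R_i=\{(x,y)\in\Lambda(R):x-y=i\}$ ($|i|\le2w$), $L_k=\{(x,y)\in\Lambda(L):x-y=k\}$ ($|k|\le w$). Height $h(x,y)=\lfloor(x+y-\lceil0.7n\rceil)/2\rfloor$ on $R$ and $\lfloor(x+y-2\lceil0.7n\rceil)/2\rfloor$ on $L$. For sum-free $S\subseteq\Lambda(R\cup L)$ meeting every fiber, its height profile is $(m,M)$ with $m(i)=\min h(S\cap R_i)$, $M(k)=\max h(S\cap L_k)$. Let $\mathcal{T}=\{(-t,2t,t):t\in[w]\}\cup\{(-w-t,2t-1,-w-1+t):t\in[w]\}$. For $s\in\{-1,0,1\}$ and $(i,j,k)\in\mathcal{T}$ set $d_s(i)=M(k+s)-m(j+s)-m(i)$ (taken to be $0$ when some index is outside the domain of $m$ or $M$), $D_s=\sum_{(i,j,k)\in\mathcal{T}}|d_s(i)|$,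 and the discrepancy is $D=\max\{D_{-1},D_0,D_1\}$. *)

theory Defs
  imports Complex_Main
begin

type_synonym pt = "int \<times> int"

definition cR :: "nat \<Rightarrow> int" where
  "cR n = \<lceil>7 * real n / 10\<rceil>"

definition wdt :: "nat \<Rightarrow> int" where
  "wdt n = \<lfloor>4 * real n / 10\<rfloor>"

definition LamR :: "nat \<Rightarrow> pt set" where
  "LamR n = {(x, y). 7 * real n / 10 \<le> real_of_int (x + y) \<and> real_of_int (x + y) \<le> real n
                     \<and> real_of_int \<bar>x - y\<bar> \<le> 8 * real n / 10}"

definition LamL :: "nat \<Rightarrow> pt set" where
  "LamL n = {(x, y). real_of_int (2 * cR n) \<le> real_of_int (x + y) \<and> real_of_int (x + y) \<le> 17 * real n / 10
                     \<and> real_of_int \<bar>x - y\<bar> \<le> 4 * real n / 10}"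

definition Rfib :: "nat \<Rightarrow> int \<Rightarrow> pt set" where
  "Rfib n i = {p \<in> LamR n. fst p - snd p = i}"

definition Lfib :: "nat \<Rightarrow> int \<Rightarrow> pt set" where
  "Lfib n k = {p \<in> LamL n. fst p - snd p = k}"

definition hR :: "nat \<Rightarrow> pt \<Rightarrow> int" where
  "hR n p = (fst p + snd p - cR n) div 2"

definition hL :: "nat \<Rightarrow> pt \<Rightarrow> int" where
  "hL n p = (fst p + snd p - 2 * cR n) div 2"

definition sum_free :: "pt set \<Rightarrow> bool" where
  "sum_free S \<longleftrightarrow> \<not> (\<exists>a\<in>S. \<exists>b\<in>S. \<exists>c\<in>S. fst a + fst b = fst c \<and> snd a + snd b = snd c)"

definition meets_all_fibers :: "nat \<Rightarrow> pt set \<Rightarrow> bool" where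
  "meets_all_fibers n S \<longleftrightarrow>
     (\<forall>i. \<bar>i\<bar> \<le> 2 * wdt n \<longrightarrow> S \<inter> Rfib n i \<noteq> {}) \<and>
     (\<forall>k. \<bar>k\<bar> \<le> wdt n \<longrightarrow> S \<inter> Lfib n k \<noteq> {})"

definition profile :: "nat \<Rightarrow> pt set \<Rightarrow> (int \<Rightarrow> int) \<times> (int \<Rightarrow> int)" where
  "profile n S =
     ((\<lambda>i. if \<bar>i\<bar> \<le> 2 * wdt n then Min (hR n ` (S \<inter> Rfib n i)) else 0),
      (\<lambda>k. if \<bar>k\<bar> \<le> wdt n then Max (hL n ` (S \<inter> Lfib n k)) else 0))"

definition profiles :: "nat \<Rightarrow> ((int \<Rightarrow> int) \<times> (int \<Rightarrow> int)) set" where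
  "profiles n = {profile n S | S. S \<subseteq> LamR n \<union> LamL n \<and> sum_free S \<and> meets_all_fibers n S}"

definition triples :: "nat \<Rightarrow> (int \<times> int \<times> int) set" where
  "triples n = (\<lambda>t. (-t, 2*t, t)) ` {1..wdt n} \<union>
               (\<lambda>t. (- wdt n - t, 2*t - 1, - wdt n - 1 + t)) ` {1..wdt n}"

definition dval :: "nat \<Rightarrow> (int \<Rightarrow> int) \<times> (int \<Rightarrow> int) \<Rightarrow> int \<Rightarrow> int \<times> int \<times> int \<Rightarrow> int" where
  "dval n mM s ijk = (case ijk of (i, j, k) \<Rightarrow>
     (if \<bar>k + s\<bar> \<le> wdt n \<and> \<bar>j + s\<bar> \<le> 2 * wdt n \<and> \<bar>i\<bar> \<le> 2 * wdt n
      then snd mM (k + s) - fst mM (j + s) - fst mM i else 0))"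

definition Dsum :: "nat \<Rightarrow> (int \<Rightarrow> int) \<times> (int \<Rightarrow> int) \<Rightarrow> int \<Rightarrow> int" where
  "Dsum n mM s = (\<Sum>ijk\<in>triples n. \<bar>dval n mM s ijk\<bar>)"

definition discrepancy :: "nat \<Rightarrow> (int \<Rightarrow> int) \<times> (int \<Rightarrow> int) \<Rightarrow> int" where
  "discrepancy n mM = max (Dsum n mM (-1)) (max (Dsum n mM 0) (Dsum n mM 1))"

end

(*
  A height profile is determined by its values d_s(i), for (i, j, k) in T and s in {-1, 0, 1},
  together with m(0), m(1), M(0), M(1): if all d_s(i) vanish, the relations
  M(k + s) = m(j + s) + m(i) express every increment of m in two ways through increments of M,
  which forces the increments of M to be constant on [0, w] and to repeat on [-w, 0]; hence M = 0,
  and then the increments of m vanish as well. So the profiles of discrepancy D inject into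
  integer vectors with at most 6n coordinates of size at most 3n and l1-norm at most 3D, plus
  four numbers in [-n, n]. Weighting a vector v by r^|v|_1 with r = 2^(-eps/3) bounds their
  number by (2n + 1)^4 ((1 + r)/(1 - r))^(6n) r^(-3D) = 2^(eps D + O(n)).
*)

theory Submission
  imports Defs "HOL-Library.FuncSet"
begin

lemma int_eq_on_interval_if_steps:
  fixes f :: "int \<Rightarrow> 'a"
  assumes "\<And>j. a \<le> j \<Longrightarrow> j < b \<Longrightarrow> f (j + 1) = f j" and "a \<le> k" "k \<le> b"
  shows "f k = f a"
  using assms(2,3)
proof (induction k rule: int_ge_induct)
  case (step j)
  then show ?case using assms(1)[of j] by simp
qed simp

lemma sum_power_abs_eq:
  fixes r :: real assumes "r \<noteq> 1"
  shows "(\<Sum>z \<in> {- int N..int N}. r ^ nat \<bar>z\<bar>) = (1 + r - 2 * r ^ Suc N) / (1 - r)"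
proof (induction N)
  case (Suc N)
  have "{- int (Suc N)..int (Suc N)} = insert (int N + 1) (insert (- int N - 1) {- int N..int N})"
    by auto
  then have "(\<Sum>z \<in> {- int (Suc N)..int (Suc N)}. r ^ nat \<bar>z\<bar>)
      = 2 * r ^ Suc N + (\<Sum>z \<in> {- int N..int N}. r ^ nat \<bar>z\<bar>)"
    by (simp add: nat_add_distrib)
  also have "\<dots> = 2 * r ^ Suc N + (1 + r - 2 * r ^ Suc N) / (1 - r)"
    by (simp only: Suc.IH)
  also have "\<dots> = (1 + r - 2 * r ^ Suc (Suc N)) / (1 - r)"
    using assms by (simp add: field_simps)
  finally show ?case .
qed (use assms in \<open>simp add: field_simps\<close>)

lemma sum_power_abs_le:
  fixes r :: real assumes "0 \<le> r" "r < 1"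
  shows "(\<Sum>z \<in> {- int N..int N}. r ^ nat \<bar>z\<bar>) \<le> (1 + r) / (1 - r)"
  using assms by (simp add: sum_power_abs_eq divide_right_mono)

lemma sum_PiE_prod_power_abs_le:
  fixes r :: real assumes "0 \<le> r" "r < 1" "finite I"
  shows "(\<Sum>g \<in> I \<rightarrow>\<^sub>E {- int N..int N}. \<Prod>q\<in>I. r ^ nat \<bar>g q\<bar>) \<le> ((1 + r) / (1 - r)) ^ card I"
proof -
  have "(\<Sum>g \<in> I \<rightarrow>\<^sub>E {- int N..int N}. \<Prod>q\<in>I. r ^ nat \<bar>g q\<bar>)
      = (\<Prod>q\<in>I. \<Sum>z \<in> {- int N..int N}. r ^ nat \<bar>z\<bar>)"
    using assms(3) by (rule prod_sum_PiE[symmetric]) simp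
  also have "\<dots> = (\<Sum>z \<in> {- int N..int N}. r ^ nat \<bar>z\<bar>) ^ card I"
    by simp
  also have "\<dots> \<le> ((1 + r) / (1 - r)) ^ card I"
    using assms by (intro power_mono sum_power_abs_le sum_nonneg) auto
  finally show ?thesis .
qed

lemma card_le_by_weight:
  fixes g :: "'a \<Rightarrow> ('i \<Rightarrow> int) \<times> 'b" and r S :: real
  assumes r: "0 < r" "r < 1" and fin: "finite I" "finite B" and inj: "inj_on g A"
    and range: "g ` A \<subseteq> (I \<rightarrow>\<^sub>E {- int N..int N}) \<times> B"
    and weight: "\<And>a. a \<in> A \<Longrightarrow> real_of_int (\<Sum>q\<in>I. \<bar>fst (g a) q\<bar>) \<le> S"
  shows "real (card A) \<le> real (card B) * ((1 + r) / (1 - r)) ^ card I * r powr (- S)"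
proof -
  define W where "W y = (\<Prod>q\<in>I. r ^ nat \<bar>fst y q\<bar>)" for y :: "('i \<Rightarrow> int) \<times> 'b"
  have W_nonneg: "0 \<le> W y" for y
    using r by (simp add: W_def prod_nonneg)
  have one_le: "1 \<le> r powr (- S) * W (g a)" if "a \<in> A" for a
  proof -
    have "W (g a) = r ^ (\<Sum>q\<in>I. nat \<bar>fst (g a) q\<bar>)"
      by (simp add: W_def power_sum)
    also have "\<dots> = r powr real (\<Sum>q\<in>I. nat \<bar>fst (g a) q\<bar>)"
      using r by (simp only: powr_realpow)
    also have "\<dots> = r powr real_of_int (\<Sum>q\<in>I. \<bar>fst (g a) q\<bar>)"
      by (simp add: of_nat_sum of_int_sum)
    also have "\<dots> \<ge> r powr S"
      using r weight[OF that] by (intro powr_mono') auto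
    finally show ?thesis
      using r by (simp add: powr_minus field_simps)
  qed
  have "real (card A) = (\<Sum>a\<in>A. 1)" by simp
  also have "\<dots> \<le> (\<Sum>a\<in>A. r powr (- S) * W (g a))"
    by (rule sum_mono) (rule one_le)
  also have "\<dots> = (\<Sum>y \<in> g ` A. r powr (- S) * W y)"
    using inj by (simp add: sum.reindex)
  also have "\<dots> \<le> (\<Sum>y \<in> (I \<rightarrow>\<^sub>E {- int N..int N}) \<times> B. r powr (- S) * W y)"
    using range fin W_nonneg by (intro sum_mono2) (auto simp: finite_PiE)
  also have "\<dots> = r powr (- S) * real (card B) * (\<Sum>f \<in> I \<rightarrow>\<^sub>E {- int N..int N}. \<Prod>q\<in>I. r ^ nat \<bar>f q\<bar>)"
    by (simp add: W_def sum.cartesian_product' sum_distrib_left ac_simps)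
  also have "\<dots> \<le> r powr (- S) * real (card B) * ((1 + r) / (1 - r)) ^ card I"
    using r fin by (intro mult_left_mono sum_PiE_prod_power_abs_le) auto
  finally show ?thesis by (simp add: ac_simps)
qed

lemma lattice_points_bounded:
  assumes "p \<in> LamR n \<union> LamL n"
  shows "p \<in> {- 2 * int n..2 * int n} \<times> {- 2 * int n..2 * int n}"
proof -
  obtain x y where p: "p = (x, y)" by (cases p)
  have "0 \<le> real_of_int (cR n)" by (simp add: cR_def)
  then have "0 \<le> real_of_int x + real_of_int y" "real_of_int x + real_of_int y \<le> 17 * real n / 10"
    "real_of_int x - real_of_int y \<le> 8 * real n / 10" "real_of_int y - real_of_int x \<le> 8 * real n / 10"
    using assms p by (auto simp: LamR_def LamL_def abs_if split: if_splits)
  then have "real_of_int \<bar>x\<bar> \<le> real_of_int (2 * int n)" "real_of_int \<bar>y\<bar> \<le> real_of_int (2 * int n)"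
    by (simp_all add: abs_le_iff)
  then show ?thesis unfolding p of_int_le_iff by (simp add: abs_le_iff)
qed

lemma finite_LamR_Un_LamL: "finite (LamR n \<union> LamL n)"
  by (rule finite_subset[of _ "{- 2 * int n..2 * int n} \<times> {- 2 * int n..2 * int n}"])
    (use lattice_points_bounded in blast, simp)

lemma hR_bounded:
  assumes "p \<in> LamR n" shows "\<bar>hR n p\<bar> \<le> int n"
proof -
  have "7 * real n / 10 \<le> real_of_int (fst p + snd p)" "real_of_int (fst p + snd p) \<le> real n"
    using assms by (auto simp: LamR_def)
  then have "cR n \<le> fst p + snd p" "fst p + snd p \<le> int n"
    unfolding cR_def by (simp_all add: ceiling_le_iff)
  moreover have "0 \<le> cR n" by (simp add: cR_def)
  ultimately show ?thesis by (simp add: hR_def)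
qed

lemma hL_bounded:
  assumes "p \<in> LamL n" shows "\<bar>hL n p\<bar> \<le> int n"
proof -
  have "2 * cR n \<le> fst p + snd p" "real_of_int (fst p + snd p) \<le> 17 * real n / 10"
    using assms by (auto simp: LamL_def)
  moreover have "7 * real n / 10 \<le> real_of_int (cR n)" by (simp add: cR_def)
  ultimately have "0 \<le> fst p + snd p - 2 * cR n" "fst p + snd p - 2 * cR n \<le> 2 * int n"
    by linarith+
  then show ?thesis by (simp add: hL_def)
qed

lemma profiles_vanish_outside:
  assumes "mM \<in> profiles n"
  shows "2 * wdt n < \<bar>i\<bar> \<Longrightarrow> fst mM i = 0" and "wdt n < \<bar>k\<bar> \<Longrightarrow> snd mM k = 0"
  using assms by (auto simp: profiles_def profile_def)

lemma profiles_bounded: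
  assumes "mM \<in> profiles n"
  shows "\<bar>fst mM i\<bar> \<le> int n" and "\<bar>snd mM k\<bar> \<le> int n"
proof -
  obtain S where mM: "mM = profile n S" and fibers: "meets_all_fibers n S"
    using assms by (auto simp: profiles_def)
  have "\<bar>Min (hR n ` (S \<inter> Rfib n i))\<bar> \<le> int n" if "\<bar>i\<bar> \<le> 2 * wdt n"
  proof -
    have "S \<inter> Rfib n i \<noteq> {}" using fibers that by (simp add: meets_all_fibers_def)
    moreover have "finite (S \<inter> Rfib n i)"
      by (rule finite_subset[OF _ finite_LamR_Un_LamL]) (auto simp: Rfib_def)
    ultimately have "Min (hR n ` (S \<inter> Rfib n i)) \<in> hR n ` (S \<inter> Rfib n i)" by simp
    then show ?thesis using hR_bounded by (auto simp: Rfib_def)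
  qed
  then show "\<bar>fst mM i\<bar> \<le> int n" by (simp add: mM profile_def)
  have "\<bar>Max (hL n ` (S \<inter> Lfib n k))\<bar> \<le> int n" if "\<bar>k\<bar> \<le> wdt n"
  proof -
    have "S \<inter> Lfib n k \<noteq> {}" using fibers that by (simp add: meets_all_fibers_def)
    moreover have "finite (S \<inter> Lfib n k)"
      by (rule finite_subset[OF _ finite_LamR_Un_LamL]) (auto simp: Lfib_def)
    ultimately have "Max (hL n ` (S \<inter> Lfib n k)) \<in> hL n ` (S \<inter> Lfib n k)" by simp
    then show ?thesis using hL_bounded by (auto simp: Lfib_def)
  qed
  then show "\<bar>snd mM k\<bar> \<le> int n" by (simp add: mM profile_def)
qed

lemma dval_diff:
  "dval n (\<lambda>i. fst P i - fst Q i, \<lambda>k. snd P k - snd Q k) s t = dval n P s t - dval n Q s t"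
  by (cases t) (simp add: dval_def)

lemma dval_vanishing_relations:
  fixes m M :: "int \<Rightarrow> int"
  assumes vanish: "\<And>t s. t \<in> triples n \<Longrightarrow> s \<in> {-1, 0, 1} \<Longrightarrow> dval n (m, M) s t = 0"
    and t: "1 \<le> t" "t \<le> wdt n" and s: "s \<in> {-1, 0, 1}"
  shows "t + s \<le> wdt n \<Longrightarrow> M (t + s) = m (2*t + s) + m (-t)"
    and "1 \<le> t + s \<Longrightarrow> M (t - wdt n - 1 + s) = m (2*t - 1 + s) + m (- wdt n - t)"
proof -
  have "(-t, 2*t, t) \<in> triples n" "(- wdt n - t, 2*t - 1, - wdt n - 1 + t) \<in> triples n"
    unfolding triples_def using t by auto
  from this[THEN vanish[OF _ s]] s t
  show "t + s \<le> wdt n \<Longrightarrow> M (t + s) = m (2*t + s) + m (-t)"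
    and "1 \<le> t + s \<Longrightarrow> M (t - wdt n - 1 + s) = m (2*t - 1 + s) + m (- wdt n - t)"
    by (auto simp: dval_def algebra_simps split: if_splits)
qed

lemma dval_kernel_M_zero:
  fixes m M :: "int \<Rightarrow> int"
  assumes vanish: "\<And>t s. t \<in> triples n \<Longrightarrow> s \<in> {-1, 0, 1} \<Longrightarrow> dval n (m, M) s t = 0"
    and M01: "M 0 = 0" "M 1 = 0" and outside: "\<And>k. wdt n < \<bar>k\<bar> \<Longrightarrow> M k = 0"
  shows "M k = 0"
proof -
  let ?w = "wdt n"
  note A = dval_vanishing_relations(1)[OF vanish] and B = dval_vanishing_relations(2)[OF vanish]
  \<comment> \<open>The two families of triples express the same increment of m through two increments of M.\<close>
  have odd_step: "M (T + 1) - M T = M (T - ?w + 1) - M (T - ?w)" if "0 \<le> T" "T \<le> ?w - 1" for T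
    using A[of "T + 1" 0] A[of "T + 1" "-1"] B[of "T + 1" 1] B[of "T + 1" 0] that
    by (simp add: algebra_simps)
  have even_step: "M (T + 1) - M T = M (T - ?w) - M (T - ?w - 1)" if "1 \<le> T" "T \<le> ?w - 1" for T
    using A[of T 1] A[of T 0] B[of "T + 1" 0] B[of "T + 1" "-1"] that
    by (simp add: algebra_simps)
  have second_difference: "M (j + 1 + 1) - M (j + 1) = M (j + 1) - M j"
    if "0 \<le> j" "j < ?w - 1" for j
    using even_step[of "j + 1"] odd_step[of j] that by (simp add: algebra_simps)
  have difference_zero: "M (T + 1) - M T = 0" if "0 \<le> T" "T \<le> ?w - 1" for T
  proof -
    have "M (T + 1) - M T = M (0 + 1) - M 0"
      by (rule int_eq_on_interval_if_steps[of 0 "?w - 1" "\<lambda>T. M (T + 1) - M T"])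
        (use second_difference that in auto)
    then show ?thesis using M01 by simp
  qed
  have nonneg: "M k = M 0" if "0 \<le> k" "k \<le> ?w" for k
    by (rule int_eq_on_interval_if_steps[of 0 ?w M]) (use difference_zero that in auto)
  have nonpos: "M k = M (- ?w)" if "- ?w \<le> k" "k \<le> 0" for k
  proof (rule int_eq_on_interval_if_steps[of "- ?w" 0 M])
    show "M (j + 1) = M j" if "- ?w \<le> j" "j < 0" for j
      using odd_step[of "j + ?w"] difference_zero[of "j + ?w"] that by simp
  qed (use that in auto)
  show ?thesis
    using nonneg[of k] nonpos[of k] nonpos[of 0] outside[of k] M01 by fastforce
qed

lemma dval_kernel_m_zero:
  fixes m M :: "int \<Rightarrow> int"
  assumes vanish: "\<And>t s. t \<in> triples n \<Longrightarrow> s \<in> {-1, 0, 1} \<Longrightarrow> dval n (m, M) s t = 0"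
    and M_zero: "\<And>k. M k = 0" and m01: "m 0 = 0" "m 1 = 0"
    and outside: "\<And>i. 2 * wdt n < \<bar>i\<bar> \<Longrightarrow> m i = 0"
  shows "m i = 0"
proof -
  let ?w = "wdt n"
  note A = dval_vanishing_relations(1)[OF vanish] and B = dval_vanishing_relations(2)[OF vanish]
  have step: "m (j + 1) = m j" if "1 \<le> j" "j < 2 * ?w" for j
  proof (cases "even j")
    case True
    then obtain T where "j = 2 * T" by blast
    then show ?thesis using A[of T 1] A[of T 0] M_zero that by (simp add: algebra_simps)
  next
    case False
    then obtain T where "j = 2 * T + 1" using oddE by blast
    then show ?thesis using A[of "T + 1" 0] A[of "T + 1" "-1"] M_zero that by (simp add: algebra_simps)
  qed
  have positive: "m i = 0" if "1 \<le> i" "i \<le> 2 * ?w" for i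
    using int_eq_on_interval_if_steps[of 1 "2 * ?w" m, OF step] that m01 by simp
  consider "i = 0" | "1 \<le> i" "i \<le> 2 * ?w" | "1 \<le> - i" "- i \<le> ?w" | "?w < - i" "- i \<le> 2 * ?w"
    | "2 * ?w < \<bar>i\<bar>"
    by linarith
  then show ?thesis
  proof cases
    case 3
    then show ?thesis using A[of "- i" 0] positive[of "- 2 * i"] M_zero by simp
  next
    case 4
    then show ?thesis using B[of "- i - ?w" 1] positive[of "2 * (- i - ?w)"] M_zero by simp
  qed (use m01 positive outside in auto)
qed

definition profile_code ::
    "nat \<Rightarrow> (int \<Rightarrow> int) \<times> (int \<Rightarrow> int) \<Rightarrow> ((int \<times> int \<times> int) \<times> int \<Rightarrow> int) \<times> int \<times> int \<times> int \<times> int" where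
  "profile_code n mM =
     (restrict (\<lambda>(t, s). dval n mM s t) (triples n \<times> {-1, 0, 1}), fst mM 0, fst mM 1, snd mM 0, snd mM 1)"

lemma inj_on_profile_code: "inj_on (profile_code n) (profiles n)"
proof (rule inj_onI)
  fix P Q assume P: "P \<in> profiles n" and Q: "Q \<in> profiles n"
    and code: "profile_code n P = profile_code n Q"
  define m where "m = (\<lambda>i. fst P i - fst Q i)"
  define M where "M = (\<lambda>k. snd P k - snd Q k)"
  have vanish: "dval n (m, M) s t = 0" if "t \<in> triples n" "s \<in> {-1, 0, 1}" for t s
  proof -
    have "dval n P s t = dval n Q s t"
      using fun_cong[OF arg_cong[where f = fst, OF code], of "(t, s)"] that
      by (simp add: profile_code_def)
    then show ?thesis by (simp add: m_def M_def dval_diff)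
  qed
  have M_zero: "M k = 0" for k
    by (rule dval_kernel_M_zero[OF vanish])
      (use code profiles_vanish_outside(2)[OF P] profiles_vanish_outside(2)[OF Q]
        in \<open>auto simp: M_def profile_code_def\<close>)
  have "m i = 0" for i
    by (rule dval_kernel_m_zero[OF vanish M_zero])
      (use code profiles_vanish_outside(1)[OF P] profiles_vanish_outside(1)[OF Q]
        in \<open>auto simp: m_def profile_code_def\<close>)
  with M_zero show "P = Q" by (simp add: prod_eq_iff fun_eq_iff m_def M_def)
qed

lemma profile_code_range:
  assumes "mM \<in> profiles n"
  shows "profile_code n mM \<in> (triples n \<times> {-1, 0, 1} \<rightarrow>\<^sub>E {- (3 * int n)..3 * int n}) \<times>
    {- int n..int n} \<times> {- int n..int n} \<times> {- int n..int n} \<times> {- int n..int n}"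
proof -
  have "dval n mM s (i, j, k) \<in> {- (3 * int n)..3 * int n}" for s i j k
    using profiles_bounded(1)[OF assms, of "j + s"] profiles_bounded(1)[OF assms, of i]
      profiles_bounded(2)[OF assms, of "k + s"]
    by (auto simp: dval_def abs_le_iff)
  moreover have "fst mM i \<in> {- int n..int n}" "snd mM k \<in> {- int n..int n}" for i k
    using profiles_bounded(1)[OF assms, of i] profiles_bounded(2)[OF assms, of k]
    by (simp_all add: abs_le_iff)
  ultimately show ?thesis by (auto simp: profile_code_def)
qed

lemma profile_code_weight:
  "(\<Sum>q \<in> triples n \<times> {-1, 0, 1}. \<bar>fst (profile_code n mM) q\<bar>) \<le> 3 * discrepancy n mM"
proof -
  have "(\<Sum>q \<in> triples n \<times> {-1, 0, 1}. \<bar>fst (profile_code n mM) q\<bar>)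
      = (\<Sum>t \<in> triples n. \<Sum>s \<in> {-1, 0, 1}. \<bar>dval n mM s t\<bar>)"
    by (subst sum.cartesian_product) (simp add: profile_code_def case_prod_beta)
  also have "\<dots> = Dsum n mM (-1) + Dsum n mM 0 + Dsum n mM 1"
    by (simp add: Dsum_def sum.swap[of _ "triples n"] sum.distrib)
  also have "\<dots> \<le> 3 * discrepancy n mM"
    by (simp add: discrepancy_def)
  finally show ?thesis .
qed

lemma card_triples_le: "card (triples n) \<le> 2 * n"
proof -
  have "card (triples n) \<le> card {1..wdt n} + card {1..wdt n}"
    unfolding triples_def by (rule card_Un_le[THEN order_trans], intro add_mono card_image_le) auto
  also have "\<dots> \<le> 2 * n"
    using nat_mono[of "wdt n" "int n"] by (simp add: wdt_def floor_le_iff)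
  finally show ?thesis .
qed

lemma card_profiles_with_discrepancy_le:
  fixes r D :: real assumes r: "0 < r" "r < 1"
  shows "real (card {mM \<in> profiles n. real_of_int (discrepancy n mM) = D})
    \<le> real (2 * n + 1) ^ 4 * ((1 + r) / (1 - r)) ^ (6 * n) * r powr (- (3 * D))"
proof -
  let ?I = "triples n \<times> {-1, 0, 1 :: int}" and ?B = "{- int n..int n}"
  have "real (card {mM \<in> profiles n. real_of_int (discrepancy n mM) = D})
      \<le> real (card (?B \<times> ?B \<times> ?B \<times> ?B)) * ((1 + r) / (1 - r)) ^ card ?I * r powr (- (3 * D))"
  proof (rule card_le_by_weight[where N = "3 * n"])
    show "inj_on (profile_code n) {mM \<in> profiles n. real_of_int (discrepancy n mM) = D}"
      by (rule inj_on_subset[OF inj_on_profile_code]) auto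
    show "profile_code n ` {mM \<in> profiles n. real_of_int (discrepancy n mM) = D}
        \<subseteq> (?I \<rightarrow>\<^sub>E {- int (3 * n)..int (3 * n)}) \<times> ?B \<times> ?B \<times> ?B \<times> ?B"
      using profile_code_range by (simp add: image_subset_iff)
    show "real_of_int (\<Sum>q \<in> ?I. \<bar>fst (profile_code n mM) q\<bar>) \<le> 3 * D"
      if "mM \<in> {mM \<in> profiles n. real_of_int (discrepancy n mM) = D}" for mM
    proof -
      have "real_of_int (\<Sum>q \<in> ?I. \<bar>fst (profile_code n mM) q\<bar>) \<le> real_of_int (3 * discrepancy n mM)"
        using profile_code_weight by (simp only: of_int_le_iff)
      with that show ?thesis by simp
    qed
  qed (use r in \<open>auto simp: triples_def\<close>)
  also have "\<dots> \<le> real (2 * n + 1) ^ 4 * ((1 + r) / (1 - r)) ^ (6 * n) * r powr (- (3 * D))"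
  proof -
    have "card ?I \<le> 6 * n"
      using card_triples_le[of n] by (simp add: card_cartesian_product)
    then have "((1 + r) / (1 - r)) ^ card ?I \<le> ((1 + r) / (1 - r)) ^ (6 * n)"
      using r by (intro power_increasing) auto
    moreover have "real (card (?B \<times> ?B \<times> ?B \<times> ?B)) = real (2 * n + 1) ^ 4"
      by (simp add: card_cartesian_product power4_eq_xxxx ac_simps)
    ultimately show ?thesis
      by (intro mult_right_mono mult_left_mono) auto
  qed
  finally show ?thesis .
qed

lemma odd_power4_mult_power_le_two_powr:
  fixes K :: real assumes "0 < n" "0 < K"
  shows "real (2 * n + 1) ^ 4 * K ^ (6 * n) \<le> 2 powr ((12 + 6 * log 2 K) * real n)"
proof -
  have "real (2 * n + 1) \<le> real (2 ^ (2 * n + 1))"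
    using less_exp[of "2 * n + 1"] by (simp only: of_nat_le_iff)
  then have "real (2 * n + 1) ^ 4 \<le> (2 ^ (2 * n + 1)) ^ 4"
    by (intro power_mono) simp_all
  also have "\<dots> = 2 ^ ((2 * n + 1) * 4)"
    by (rule power_mult[symmetric])
  also have "\<dots> \<le> 2 ^ (12 * n)"
    using assms by (intro power_increasing) auto
  also have "\<dots> = 2 powr (12 * real n)"
    by (simp add: powr_realpow[symmetric])
  finally have "real (2 * n + 1) ^ 4 \<le> 2 powr (12 * real n)" .
  moreover have "K ^ (6 * n) = 2 powr (6 * log 2 K * real n)"
  proof -
    have "K ^ (6 * n) = (2 powr log 2 K) ^ (6 * n)"
      using \<open>0 < K\<close> by simp
    also have "\<dots> = 2 powr (6 * log 2 K * real n)"
      by (simp add: powr_power ac_simps)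
    finally show ?thesis .
  qed
  ultimately have "real (2 * n + 1) ^ 4 * K ^ (6 * n) \<le> 2 powr (12 * real n) * 2 powr (6 * log 2 K * real n)"
    by (simp add: mult_right_mono)
  also have "\<dots> = 2 powr ((12 + 6 * log 2 K) * real n)"
    by (simp add: powr_add[symmetric] algebra_simps)
  finally show ?thesis .
qed

theorem mainTheorem19:
  shows "\<forall>\<epsilon>::real. \<epsilon> > 0 \<longrightarrow> (\<exists>C::real. \<forall>n::nat. n > 0 \<longrightarrow> (\<forall>D::real. D \<ge> 0 \<longrightarrow>
     real (card {mM \<in> profiles n. real_of_int (discrepancy n mM) = D}) \<le> 2 powr (\<epsilon> * D + C * real n)))"
proof (intro allI impI)
  fix \<epsilon> :: real assume "\<epsilon> > 0"
  define r where "r = 2 powr (- \<epsilon> / 3)"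
  define K where "K = (1 + r) / (1 - r)"
  have r: "0 < r" "r < 1"
    using \<open>\<epsilon> > 0\<close> by (simp_all add: r_def powr_less_one)
  then have "0 < K" by (simp add: K_def)
  show "\<exists>C. \<forall>n. n > 0 \<longrightarrow> (\<forall>D \<ge> 0.
      real (card {mM \<in> profiles n. real_of_int (discrepancy n mM) = D}) \<le> 2 powr (\<epsilon> * D + C * real n))"
  proof (intro exI[of _ "12 + 6 * log 2 K"] allI impI)
    fix n :: nat and D :: real assume "n > 0"
    have "real (card {mM \<in> profiles n. real_of_int (discrepancy n mM) = D})
        \<le> real (2 * n + 1) ^ 4 * K ^ (6 * n) * r powr (- (3 * D))"
      unfolding K_def by (rule card_profiles_with_discrepancy_le[OF r])
    also have "\<dots> \<le> 2 powr ((12 + 6 * log 2 K) * real n) * 2 powr (\<epsilon> * D)"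
    proof -
      have "r powr (- (3 * D)) = 2 powr (\<epsilon> * D)"
        by (simp add: r_def powr_powr)
      then show ?thesis
        using odd_power4_mult_power_le_two_powr[OF \<open>n > 0\<close> \<open>0 < K\<close>] by (simp add: mult_right_mono)
    qed
    also have "\<dots> = 2 powr (\<epsilon> * D + (12 + 6 * log 2 K) * real n)"
      by (simp add: powr_add[symmetric] add.commute)
    finally show "real (card {mM \<in> profiles n. real_of_int (discrepancy n mM) = D})
        \<le> 2 powr (\<epsilon> * D + (12 + 6 * log 2 K) * real n)" .
  qed
qed

end
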